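(* There exists a constant $\Delta T$ (independent of $\alpha$) such that, for all sufficiently large $\alpha$, $T_{\max}\ge\frac1\lambda(\log\alpha+\Delta T)$. Furthermore, for all $t\le\frac1\lambda(\log\alpha+\Delta T)$, $$\Big\|\frac1\alpha e^{\lambda t}\boldsymbol{\theta}(t)-\bar{\boldsymbol{\theta}}_{\mathrm{init}}\Big\|_2=O(\alpha^{-L})\cdot e^{L\lambda t},$$ where the $O(\cdot)$ constant does not depend on $\alpha$ or $t$.
   Context: Regression setting. Training data $\{(\boldsymbol{x}_i,y_i)\}_{i=1}^n$, $y_i\in\mathbb{R}$. Model $f(\boldsymbol{\theta};\boldsymbol{x})$, $\boldsymbol{\theta}\in\mathbb{R}^D$, $\mathcal{C}^2$ and $L$-homogeneous in $\boldsymbol{\theta}$ for every $\boldsymbol{x}$; $f_i(\boldsymbol{\theta}):=f(\boldsymbol{\theta};\boldsymbol{x}_i)$. Fixed $\bar{\boldsymbol{\theta}}_{\mathrm{init}}$ with $f(\bar{\boldsymbol{\theta}}_{\mathrm{init}};\boldsymbol{x})=0$ for all $\boldsymbol{x}$. Loss $\mathcal{L}(\boldsymbol{\theta})=\frac1n\sum_i(f_i(\boldsymbol{\theta})-y_i)^2$, $\mathcal{L}_\lambda=\mathcal{L}+\frac\lambda2\|\boldsymbol{\theta}\|_2^2$, $\lambda=\lambda(\alpha)=\Theta(\alpha^{-p})$ for a constant $p>0$. $\boldsymbol{\theta}(t)$ is the gradient flow $\frac{d\boldsymbol{\theta}}{dt}=-\nabla\mathcal{L}_\lambda(\boldsymbol{\theta})$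 from $\boldsymbol{\theta}(0)=\alpha\bar{\boldsymbol{\theta}}_{\mathrm{init}}$. $\boldsymbol{\Phi}(\boldsymbol{\theta})\in\mathbb{R}^{D\times n}$ has $i$-th column $\nabla f_i(\boldsymbol{\theta})$, $\boldsymbol{K}(\boldsymbol{\theta}):=\boldsymbol{\Phi}(\boldsymbol{\theta})^\top\boldsymbol{\Phi}(\boldsymbol{\theta})$, and $\nu_{\mathrm{ntk}}>0$ is the minimum eigenvalue of $\boldsymbol{K}(\bar{\boldsymbol{\theta}}_{\mathrm{init}})$ (the vectors $\nabla f_i(\bar{\boldsymbol{\theta}}_{\mathrm{init}})$ are assumed linearly independent). $\epsilon_{\max}>0$ is a fixed constant such that $\lambda_{\min}(\boldsymbol{K}(\boldsymbol{\theta}))>\frac{\nu_{\mathrm{ntk}}}{2}$ whenever $\|\boldsymbol{\theta}-\bar{\boldsymbol{\theta}}_{\mathrm{init}}\|_2<\epsilon_{\max}$, and $T_{\max}:=\inf\{t\ge0:\|\frac{e^{\lambda t}}{\alpha}\boldsymbol{\theta}(t)-\bar{\boldsymbol{\theta}}_{\mathrm{init}}\|_2>\epsilon_{\max}\}$. *)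

theory Defs
  imports "HOL-Analysis.Analysis" "HOL-Library.Landau_Symbols"
begin

definition grad :: "('a::euclidean_space \<Rightarrow> real) \<Rightarrow> 'a \<Rightarrow> 'a" where
  "grad g th = (SOME v. (g has_derivative (\<lambda>h. v \<bullet> h)) (at th))"

definition C2 :: "('a::euclidean_space \<Rightarrow> real) \<Rightarrow> bool" where
  "C2 g \<longleftrightarrow> (\<exists>G H. (\<forall>th. (g has_derivative (\<lambda>h. G th \<bullet> h)) (at th))
                 \<and> (\<forall>th. (G has_derivative blinfun_apply (H th)) (at th))
                 \<and> continuous_on UNIV (H :: 'a \<Rightarrow> 'a \<Rightarrow>\<^sub>L 'a))"

definition homogeneous :: "real \<Rightarrow> ('a::real_vector \<Rightarrow> real) \<Rightarrow> bool" where
  "homogeneous L g \<longleftrightarrow> (\<forall>c th. c > 0 \<longrightarrow> g (c *\<^sub>R th) = c powr L * g th)"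

text \<open>Square loss with data index set 'i (n = CARD('i)), f_i(theta) = f theta (xs i).\<close>
definition sqloss :: "('a \<Rightarrow> 'x \<Rightarrow> real) \<Rightarrow> ('i::finite \<Rightarrow> 'x) \<Rightarrow> ('i \<Rightarrow> real) \<Rightarrow> 'a \<Rightarrow> real" where
  "sqloss f xs ys th = (1 / real CARD('i)) * (\<Sum>i\<in>UNIV. (f th (xs i) - ys i)\<^sup>2)"

definition regloss :: "('a::real_normed_vector \<Rightarrow> 'x \<Rightarrow> real) \<Rightarrow> ('i::finite \<Rightarrow> 'x) \<Rightarrow> ('i \<Rightarrow> real)
    \<Rightarrow> real \<Rightarrow> 'a \<Rightarrow> real" where
  "regloss f xs ys lam th = sqloss f xs ys th + lam / 2 * (norm th)\<^sup>2"

definition ntk :: "('a::euclidean_space \<Rightarrow> 'x \<Rightarrow> real) \<Rightarrow> ('i::finite \<Rightarrow> 'x) \<Rightarrow> 'a \<Rightarrow> real^'i^'i" where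
  "ntk f xs th = (\<chi> i j. grad (\<lambda>p. f p (xs i)) th \<bullet> grad (\<lambda>p. f p (xs j)) th)"

definition min_eig :: "real^'i^'i \<Rightarrow> real" where
  "min_eig K = Min {mu. \<exists>v. v \<noteq> 0 \<and> K *v v = mu *\<^sub>R v}"

text \<open>T_max as an extended real (infimum of the empty set is +infinity).\<close>
definition Tmax :: "real \<Rightarrow> real \<Rightarrow> (real \<Rightarrow> 'a::real_normed_vector) \<Rightarrow> 'a \<Rightarrow> real \<Rightarrow> ereal" where
  "Tmax lam alpha th thinit eps =
     Inf (ereal ` {t. t \<ge> 0 \<and> norm ((exp (lam * t) / alpha) *\<^sub>R th t - thinit) > eps})"

end

(*
  Write phi(t) = e^(lam t) theta(t) / alpha and s(t) = alpha e^(-lam t), so that theta = s phi.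
  By L-homogeneity the gradients of the f_i at theta are s^(L-1) times those at phi, and Euler's
  identity grad f_i(theta) . theta = L f_i(theta) turns the weight decay into a damping of the
  residual r = (f_i(theta) - y_i)_i.  As long as phi stays in a ball around thinit on which the
  gradients satisfy Riesz bounds nu |v| <= |sum_i v_i grad f_i| <= M |v|, the quantity
      |phi - thinit| + s^(-L) / nu * (|r| - |y|)
  is nonincreasing.  It vanishes at t = 0, which gives |phi(t) - thinit| <= |y| / nu * alpha^(-L)
  e^(L lam t).  A continuity argument keeps phi in the ball up to the time (log alpha + Delta T) / lam
  at which this bound reaches the radius of the ball.
*)

theory Submission
  imports Defs
begin

section \<open>Gradients of homogeneous functions\<close>

lemma grad_eqI:
  fixes g :: "'a::euclidean_space \<Rightarrow> real"
  assumes "(g has_derivative (\<lambda>h. v \<bullet> h)) (at x)"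
  shows "grad g x = v"
proof -
  have "(g has_derivative (\<lambda>h. grad g x \<bullet> h)) (at x)"
    unfolding grad_def using assms by (rule someI)
  then have "(\<lambda>h. grad g x \<bullet> h) = (\<lambda>h. v \<bullet> h)"
    using assms by (rule has_derivative_unique)
  then show ?thesis
    by (subst vector_eq_rdot[symmetric]) (simp add: fun_eq_iff)
qed

lemma C2_has_derivative_grad:
  fixes g :: "'a::euclidean_space \<Rightarrow> real"
  assumes "C2 g"
  shows "(g has_derivative (\<lambda>h. grad g x \<bullet> h)) (at x)"
proof -
  obtain G where G: "\<And>x. (g has_derivative (\<lambda>h. G x \<bullet> h)) (at x)"
    using assms unfolding C2_def by blast
  then show ?thesis
    using grad_eqI[OF G] by simp
qed

lemma C2_continuous_grad:
  fixes g :: "'a::euclidean_space \<Rightarrow> real"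
  assumes "C2 g"
  shows "continuous_on UNIV (grad g)"
proof -
  obtain G H where G: "\<And>x. (g has_derivative (\<lambda>h. G x \<bullet> h)) (at x)"
    and GH: "\<And>x. (G has_derivative blinfun_apply (H x)) (at x)"
    using assms unfolding C2_def by blast
  have "grad g = G"
    using grad_eqI[OF G] by blast
  then show ?thesis
    using GH has_derivative_continuous continuous_at_imp_continuous_on by blast
qed

lemma homogeneous_grad_scaleR:
  fixes g :: "'a::euclidean_space \<Rightarrow> real"
  assumes "C2 g" "homogeneous L g" "c > 0"
  shows "grad g (c *\<^sub>R x) = c powr (L - 1) *\<^sub>R grad g x"
proof -
  note D = C2_has_derivative_grad[OF assms(1)]
  have "((\<lambda>z. g (c *\<^sub>R z)) has_derivative (\<lambda>h. grad g (c *\<^sub>R x) \<bullet> (c *\<^sub>R h))) (at x)"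
    by (rule has_derivative_compose[OF has_derivative_scaleR_right[OF has_derivative_ident] D])
  moreover have "(\<lambda>z. g (c *\<^sub>R z)) = (\<lambda>z. c powr L * g z)"
    using assms(2,3) unfolding homogeneous_def by auto
  ultimately have "((\<lambda>z. c powr L * g z) has_derivative (\<lambda>h. grad g (c *\<^sub>R x) \<bullet> (c *\<^sub>R h))) (at x)"
    by simp
  moreover have "((\<lambda>z. c powr L * g z) has_derivative (\<lambda>h. c powr L * (grad g x \<bullet> h))) (at x)"
    by (rule has_derivative_mult_right[OF D])
  ultimately have eq: "(\<lambda>h. grad g (c *\<^sub>R x) \<bullet> (c *\<^sub>R h)) = (\<lambda>h. c powr L * (grad g x \<bullet> h))"
    by (rule has_derivative_unique)
  then have "(c *\<^sub>R grad g (c *\<^sub>R x)) \<bullet> h = (c powr L *\<^sub>R grad g x) \<bullet> h" for h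
    using fun_cong[OF eq, of h] by simp
  then have scaled: "c *\<^sub>R grad g (c *\<^sub>R x) = c powr L *\<^sub>R grad g x"
    by (subst vector_eq_rdot[symmetric]) blast
  have "grad g (c *\<^sub>R x) = (1 / c) *\<^sub>R (c *\<^sub>R grad g (c *\<^sub>R x))"
    using \<open>c > 0\<close> by simp
  also have "\<dots> = (c powr L / c) *\<^sub>R grad g x"
    unfolding scaled by simp
  also have "c powr L / c = c powr (L - 1)"
    using \<open>c > 0\<close> by (simp add: powr_diff)
  finally show ?thesis .
qed

lemma homogeneous_euler:
  fixes g :: "'a::euclidean_space \<Rightarrow> real"
  assumes "C2 g" "homogeneous L g"
  shows "grad g x \<bullet> x = L * g x"
proof -
  have "((\<lambda>c. g (c *\<^sub>R x)) has_derivative (\<lambda>d. grad g (1 *\<^sub>R x) \<bullet> (d *\<^sub>R x))) (at 1)"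
    by (rule has_derivative_compose[OF has_derivative_scaleR_left[OF has_derivative_ident]
        C2_has_derivative_grad[OF assms(1)]])
  then have "((\<lambda>c. g (c *\<^sub>R x)) has_real_derivative grad g x \<bullet> x) (at 1)"
    by (simp add: has_field_derivative_def mult_commute_abs)
  moreover have "((\<lambda>c. g (c *\<^sub>R x)) has_real_derivative L * g x) (at 1)"
  proof (rule has_field_derivative_transform_within_open[where S = "{0<..}"])
    show "((\<lambda>c. c powr L * g x) has_real_derivative L * g x) (at 1)"
      by (auto intro!: derivative_eq_intros)
  qed (use assms(2) in \<open>auto simp: homogeneous_def\<close>)
  ultimately show ?thesis
    by (rule DERIV_unique)
qed

lemma grad_regloss:
  fixes f :: "'a::euclidean_space \<Rightarrow> 'x \<Rightarrow> real" and xs :: "'i::finite \<Rightarrow> 'x"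
  assumes "\<And>x. C2 (\<lambda>th. f th x)"
  shows "grad (regloss f xs ys lam) th =
    (2 / real CARD('i)) *\<^sub>R (\<Sum>i\<in>UNIV. (f th (xs i) - ys i) *\<^sub>R grad (\<lambda>th. f th (xs i)) th)
      + lam *\<^sub>R th"
proof (rule grad_eqI)
  have regloss_eq: "regloss f xs ys lam =
      (\<lambda>th. (1 / real CARD('i)) * (\<Sum>i\<in>UNIV. (f th (xs i) - ys i)\<^sup>2) + lam / 2 * (th \<bullet> th))"
    by (auto simp: fun_eq_iff regloss_def sqloss_def power2_norm_eq_inner)
  have squares: "((\<lambda>th. \<Sum>i\<in>UNIV. (f th (xs i) - ys i)\<^sup>2) has_derivative
      (\<lambda>h. \<Sum>i\<in>UNIV. 2 * (f th (xs i) - ys i) * (grad (\<lambda>th. f th (xs i)) th \<bullet> h))) (at th)"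
    by (rule has_derivative_eq_rhs[OF has_derivative_sum[OF has_derivative_power[OF
          has_derivative_diff[OF C2_has_derivative_grad[OF assms] has_derivative_const]]]])
      (simp add: fun_eq_iff algebra_simps)
  have "(regloss f xs ys lam has_derivative (\<lambda>h. (1 / real CARD('i)) *
      (\<Sum>i\<in>UNIV. 2 * (f th (xs i) - ys i) * (grad (\<lambda>th. f th (xs i)) th \<bullet> h))
      + lam / 2 * (th \<bullet> h + h \<bullet> th))) (at th)"
    unfolding regloss_eq
    by (intro has_derivative_add has_derivative_mult_right squares has_derivative_inner
        has_derivative_ident)
  then show "(regloss f xs ys lam has_derivative (\<lambda>h. ((2 / real CARD('i)) *\<^sub>R
      (\<Sum>i\<in>UNIV. (f th (xs i) - ys i) *\<^sub>R grad (\<lambda>th. f th (xs i)) th) + lam *\<^sub>R th) \<bullet> h)) (at th)"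
    by (rule has_derivative_eq_rhs)
      (simp add: fun_eq_iff inner_add_left inner_sum_left sum_distrib_left inner_commute[of _ th]
        algebra_simps)
qed

section \<open>Riesz bounds\<close>

definition lincomb :: "('i::finite \<Rightarrow> 'a::real_vector) \<Rightarrow> real^'i \<Rightarrow> 'a" where
  "lincomb b v = (\<Sum>i\<in>UNIV. v $ i *\<^sub>R b i)"

definition riesz_bounds_near ::
    "('i::finite \<Rightarrow> 'a::real_normed_vector \<Rightarrow> 'a) \<Rightarrow> 'a \<Rightarrow> real \<Rightarrow> real \<Rightarrow> real \<Rightarrow> bool" where
  "riesz_bounds_near G x0 \<delta> \<nu> M \<longleftrightarrow> (\<forall>x v. norm (x - x0) < \<delta> \<longrightarrow>
     \<nu> * norm v \<le> norm (lincomb (\<lambda>i. G i x) v) \<and> norm (lincomb (\<lambda>i. G i x) v) \<le> M * norm v)"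

lemma linear_lincomb: "linear (lincomb b)"
  by (auto intro!: linearI simp: lincomb_def scaleR_add_left sum.distrib scaleR_sum_right)

lemma lincomb_diff: "lincomb (\<lambda>i. b i - c i) v = lincomb b v - lincomb c v"
  by (simp add: lincomb_def scaleR_diff_right sum_subtractf)

lemma inj_lincomb:
  fixes b :: "'i::finite \<Rightarrow> 'a::real_vector"
  assumes indep: "\<not> dependent (range b)" and "inj b"
  shows "inj (lincomb b)"
proof -
  have "v = 0" if comb: "lincomb b v = 0" for v
  proof (rule ccontr)
    assume "v \<noteq> 0"
    then obtain j where "v $ j \<noteq> 0"
      by (metis vec_eq_iff zero_index)
    define u where "u x = v $ inv b x" for x
    have "(\<Sum>x\<in>range b. u x *\<^sub>R x) = lincomb b v"
      using \<open>inj b\<close> by (simp add: lincomb_def sum.reindex u_def)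
    moreover have "u (b j) \<noteq> 0"
      using \<open>inj b\<close> \<open>v $ j \<noteq> 0\<close> by (simp add: u_def)
    ultimately have "dependent (range b)"
      using comb by (subst dependent_finite) auto
    with indep show False ..
  qed
  then show ?thesis
    using linear_inj_iff_eq_0[OF linear_lincomb[of b]] by blast
qed

lemma norm_lincomb_le:
  fixes b :: "'i::finite \<Rightarrow> 'a::real_normed_vector"
  shows "norm (lincomb b v) \<le> norm v * (\<Sum>i\<in>UNIV. norm (b i))"
proof -
  have "norm (lincomb b v) \<le> (\<Sum>i\<in>UNIV. \<bar>v $ i\<bar> * norm (b i))"
    unfolding lincomb_def by (rule norm_sum[THEN order_trans]) simp
  also have "\<dots> \<le> (\<Sum>i\<in>UNIV. norm v * norm (b i))"
    by (intro sum_mono mult_right_mono component_le_norm_cart) auto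
  finally show ?thesis
    by (simp add: sum_distrib_left)
qed

lemma riesz_bounds_near_exists:
  fixes G :: "'i::finite \<Rightarrow> 'a::euclidean_space \<Rightarrow> 'a"
  assumes cont: "\<And>i. continuous_on UNIV (G i)"
    and indep: "\<not> dependent (range (\<lambda>i. G i x0))" and inj: "inj (\<lambda>i. G i x0)"
  obtains \<delta> \<nu> M where "\<delta> > 0" "\<nu> > 0" "M > 0" "riesz_bounds_near G x0 \<delta> \<nu> M"
proof -
  obtain m where "m > 0" and m: "\<And>v. m * norm v \<le> norm (lincomb (\<lambda>i. G i x0) v)"
    using linear_inj_bounded_below_pos[OF linear_lincomb inj_lincomb[OF indep inj]] by blast
  define E where "E x = (\<Sum>i\<in>UNIV. norm (G i x - G i x0))" for x
  have "isCont E x0"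
    unfolding E_def using cont by (intro continuous_intros) (auto simp: continuous_on_eq_continuous_at)
  moreover have "E x0 = 0"
    by (simp add: E_def)
  ultimately obtain \<delta> where "\<delta> > 0" and \<delta>: "\<And>x. dist x x0 < \<delta> \<Longrightarrow> \<bar>E x\<bar> < m / 2"
    using \<open>m > 0\<close> unfolding continuous_at_eps_delta dist_real_def
    by (metis diff_zero half_gt_zero)
  define M where "M = (\<Sum>i\<in>UNIV. norm (G i x0)) + m / 2"
  have "m / 2 * norm v \<le> norm (lincomb (\<lambda>i. G i x) v) \<and> norm (lincomb (\<lambda>i. G i x) v) \<le> M * norm v"
    if "norm (x - x0) < \<delta>" for x v
  proof -
    have split: "lincomb (\<lambda>i. G i x) v = lincomb (\<lambda>i. G i x0) v + lincomb (\<lambda>i. G i x - G i x0) v"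
      by (simp add: lincomb_diff)
    have "E x < m / 2"
      using \<delta>[of x] that by (simp add: dist_norm)
    then have small: "norm (lincomb (\<lambda>i. G i x - G i x0) v) \<le> norm v * (m / 2)"
      using norm_lincomb_le[of "\<lambda>i. G i x - G i x0" v] mult_left_mono[of "E x" "m / 2" "norm v"]
      unfolding E_def by simp
    have "m / 2 * norm v \<le> norm (lincomb (\<lambda>i. G i x0) v) - norm (lincomb (\<lambda>i. G i x - G i x0) v)"
      using m[of v] small by (simp add: algebra_simps)
    also have "\<dots> \<le> norm (lincomb (\<lambda>i. G i x) v)"
      unfolding split by (rule norm_diff_ineq)
    finally have lower: "m / 2 * norm v \<le> norm (lincomb (\<lambda>i. G i x) v)" .
    have "norm (lincomb (\<lambda>i. G i x) v)
        \<le> norm (lincomb (\<lambda>i. G i x0) v) + norm (lincomb (\<lambda>i. G i x - G i x0) v)"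
      unfolding split by (rule norm_triangle_ineq)
    also have "\<dots> \<le> M * norm v"
      using norm_lincomb_le[of "\<lambda>i. G i x0" v] small by (simp add: M_def algebra_simps)
    finally show ?thesis
      using lower by blast
  qed
  then have "riesz_bounds_near G x0 \<delta> (m / 2) M"
    by (simp add: riesz_bounds_near_def)
  moreover have "m / 2 > 0"
    using \<open>m > 0\<close> by simp
  moreover have "M > 0"
    unfolding M_def using \<open>m / 2 > 0\<close> by (intro add_nonneg_pos sum_nonneg) auto
  ultimately show ?thesis
    using \<open>\<delta> > 0\<close> that by blast
qed

section \<open>A Lyapunov inequality\<close>

lemma has_real_derivative_nonpos_imp_le:
  fixes f :: "real \<Rightarrow> real"
  assumes "a \<le> b"
    and deriv: "\<And>x. x \<in> {a..b} \<Longrightarrow> (f has_real_derivative f' x) (at x within {a..b})"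
    and nonpos: "\<And>x. x \<in> {a<..<b} \<Longrightarrow> f' x \<le> 0"
  shows "f b \<le> f a"
proof (rule DERIV_nonpos_imp_decreasing_open[OF \<open>a \<le> b\<close>])
  fix x assume "a < x" "x < b"
  then have "(f has_real_derivative f' x) (at x)"
    using deriv[of x] at_within_interior[of x "{a..b}"] by simp
  then show "\<exists>y. (f has_real_derivative y) (at x) \<and> y \<le> 0"
    using nonpos \<open>a < x\<close> \<open>x < b\<close> by auto
next
  show "continuous_on {a..b} f"
    using deriv DERIV_continuous continuous_on_eq_continuous_within by blast
qed

lemma sqrt_sum_sq_bounds:
  fixes x e :: real
  assumes "x \<ge> 0" "e > 0"
  shows "x \<le> sqrt (x\<^sup>2 + e\<^sup>2)" and "0 < sqrt (x\<^sup>2 + e\<^sup>2)" and "sqrt (x\<^sup>2 + e\<^sup>2) \<le> x + e"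
    and "sqrt (x\<^sup>2 + e\<^sup>2) - x\<^sup>2 / sqrt (x\<^sup>2 + e\<^sup>2) \<le> e"
proof -
  have lower: "a \<le> sqrt (a\<^sup>2 + b\<^sup>2)" for a b :: real
    by (simp add: real_le_rsqrt)
  show "x \<le> sqrt (x\<^sup>2 + e\<^sup>2)"
    by (rule lower)
  have "e \<le> sqrt (x\<^sup>2 + e\<^sup>2)"
    using lower[of e x] by (simp add: add.commute)
  then show "0 < sqrt (x\<^sup>2 + e\<^sup>2)"
    using \<open>e > 0\<close> by linarith
  show "sqrt (x\<^sup>2 + e\<^sup>2) \<le> x + e"
    using assms by (intro real_le_lsqrt) (auto simp: power2_eq_square algebra_simps)
  define N where "N = sqrt (x\<^sup>2 + e\<^sup>2)"
  have "N - x\<^sup>2 / N = e * (e / N)"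
    using \<open>0 < sqrt (x\<^sup>2 + e\<^sup>2)\<close> real_sqrt_pow2[of "x\<^sup>2 + e\<^sup>2"]
    unfolding N_def[symmetric] by (simp add: field_simps power2_eq_square)
  also have "\<dots> \<le> e"
    using \<open>e > 0\<close> \<open>e \<le> sqrt (x\<^sup>2 + e\<^sup>2)\<close> \<open>0 < sqrt (x\<^sup>2 + e\<^sup>2)\<close>
    unfolding N_def by (intro mult_left_le) (simp_all only: divide_le_eq_1_pos less_imp_le)
  finally show "sqrt (x\<^sup>2 + e\<^sup>2) - x\<^sup>2 / sqrt (x\<^sup>2 + e\<^sup>2) \<le> e"
    by (simp add: N_def)
qed

lemma has_real_derivative_smoothed_norm:
  fixes w :: "real \<Rightarrow> 'a::real_inner"
  assumes "(w has_vector_derivative w') (at x within S)" "e \<noteq> 0"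
  shows "((\<lambda>t. sqrt ((norm (w t))\<^sup>2 + e\<^sup>2)) has_real_derivative
           (w x \<bullet> w') / sqrt ((norm (w x))\<^sup>2 + e\<^sup>2)) (at x within S)"
proof -
  have "((\<lambda>t. w t \<bullet> w t) has_real_derivative 2 * (w x \<bullet> w')) (at x within S)"
    using has_derivative_inner[OF assms(1)[unfolded has_vector_derivative_def]
        assms(1)[unfolded has_vector_derivative_def]]
    by (simp add: has_field_derivative_def inner_commute algebra_simps mult_commute_abs)
  moreover have "(norm (w x))\<^sup>2 + e\<^sup>2 > 0"
    using \<open>e \<noteq> 0\<close> by (simp add: add_nonneg_pos)
  ultimately show ?thesis
    unfolding power2_norm_eq_inner
    by (auto intro!: derivative_eq_intros simp: field_simps)
qed

lemma inner_div_smoothed_norm_le: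
  fixes u u' :: "'a::real_inner"
  assumes "e > 0"
  shows "(u \<bullet> u') / sqrt ((norm u)\<^sup>2 + e\<^sup>2) \<le> norm u'"
proof -
  note N = sqrt_sum_sq_bounds[OF norm_ge_zero \<open>e > 0\<close>, of u]
  have "u \<bullet> u' \<le> norm u * norm u'"
    by (rule norm_cauchy_schwarz)
  also have "\<dots> \<le> sqrt ((norm u)\<^sup>2 + e\<^sup>2) * norm u'"
    using N(1) by (rule mult_right_mono) simp
  finally show ?thesis
    using N(2) by (simp add: pos_divide_le_eq mult.commute)
qed

lemma smoothed_residual_derivative_le:
  fixes r r' y :: "'b::real_inner"
  assumes "e > 0" "\<nu> > 0" "M \<ge> 0" "\<kappa> \<ge> 0" "E > 0" "k \<ge> 0"
    and rr': "r \<bullet> r' \<le> - k / (\<nu> * E) * Q\<^sup>2 - \<kappa> * ((norm r)\<^sup>2 + r \<bullet> y)"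
    and Q: "\<nu> * norm r \<le> Q" "Q \<le> M * norm r"
  shows "\<kappa> * E * (sqrt ((norm r)\<^sup>2 + e\<^sup>2) - norm y) + E * ((r \<bullet> r') / sqrt ((norm r)\<^sup>2 + e\<^sup>2))
    \<le> - (k * Q) + e * (\<kappa> * E + k * M)"
proof -
  define \<rho> where "\<rho> = norm r"
  define R where "R = sqrt (\<rho>\<^sup>2 + e\<^sup>2)"
  have "\<rho> \<ge> 0"
    by (simp add: \<rho>_def)
  have N: "\<rho> \<le> R" "0 < R" "R - \<rho> \<le> e" "R - \<rho>\<^sup>2 / R \<le> e"
    using sqrt_sum_sq_bounds[OF \<open>\<rho> \<ge> 0\<close> \<open>e > 0\<close>] unfolding R_def by auto
  have "Q \<ge> 0"
    using Q(1) \<open>\<nu> > 0\<close> \<open>\<rho> \<ge> 0\<close> unfolding \<rho>_def by (meson mult_nonneg_nonneg less_imp_le order_trans)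
  have "E * ((r \<bullet> r') / R) \<le> E / R * (- k / (\<nu> * E) * Q\<^sup>2 - \<kappa> * (\<rho>\<^sup>2 + r \<bullet> y))"
    using rr' \<open>E > 0\<close> N(2) unfolding \<rho>_def by (simp add: mult_left_mono divide_right_mono)
  also have "\<dots> = - (k / \<nu>) * (Q\<^sup>2 / R) - \<kappa> * E * ((\<rho>\<^sup>2 + r \<bullet> y) / R)"
    using \<open>E > 0\<close> N(2) \<open>\<nu> > 0\<close> by (simp add: field_simps)
  finally have main: "E * ((r \<bullet> r') / R) \<le> - (k / \<nu>) * (Q\<^sup>2 / R) - \<kappa> * E * ((\<rho>\<^sup>2 + r \<bullet> y) / R)" .
  have "Q * (R - \<rho>) \<le> Q * e"
    by (rule mult_left_mono[OF N(3) \<open>Q \<ge> 0\<close>])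
  also have "\<dots> \<le> M * \<rho> * e"
    by (rule mult_right_mono[OF Q(2)[folded \<rho>_def]]) (use \<open>e > 0\<close> in simp)
  also have "\<dots> \<le> M * R * e"
    using N(1) \<open>M \<ge> 0\<close> \<open>e > 0\<close> by (simp add: mult_left_mono mult_right_mono)
  finally have "Q - M * e \<le> Q * \<rho> / R"
    using N(2) by (simp add: field_simps)
  also have "\<dots> \<le> Q\<^sup>2 / R / \<nu>"
  proof -
    have "\<nu> * \<rho> * Q \<le> Q * Q"
      by (rule mult_right_mono[OF Q(1)[folded \<rho>_def] \<open>Q \<ge> 0\<close>])
    then show ?thesis
      using N(2) \<open>\<nu> > 0\<close> by (simp add: field_simps power2_eq_square)
  qed
  finally have "k * (Q - M * e) \<le> k * (Q\<^sup>2 / R / \<nu>)"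
    by (rule mult_left_mono) (rule \<open>k \<ge> 0\<close>)
  then have Q_part: "k * Q - e * (k * M) \<le> (k / \<nu>) * (Q\<^sup>2 / R)"
    by (simp add: algebra_simps)
  have "\<rho> * norm y / R \<le> norm y"
    using mult_right_mono[OF N(1) norm_ge_zero[of y]] N(2) by (simp add: pos_divide_le_eq mult.commute)
  moreover have "- (\<rho> * norm y) \<le> r \<bullet> y"
    using Cauchy_Schwarz_ineq2[of r y] unfolding \<rho>_def by linarith
  then have "- (\<rho> * norm y) / R \<le> (r \<bullet> y) / R"
    using N(2) by (intro divide_right_mono) auto
  ultimately have "R - norm y - (\<rho>\<^sup>2 + r \<bullet> y) / R \<le> e"
    using N(4) by (simp add: add_divide_distrib)
  then have "\<kappa> * E * (R - norm y - (\<rho>\<^sup>2 + r \<bullet> y) / R) \<le> \<kappa> * E * e"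
    using \<open>E > 0\<close> \<open>\<kappa> \<ge> 0\<close> by (intro mult_left_mono) auto
  then have y_part: "\<kappa> * E * (R - norm y) - \<kappa> * E * ((\<rho>\<^sup>2 + r \<bullet> y) / R) \<le> e * (\<kappa> * E)"
    by (simp only: right_diff_distrib mult.commute[of e "\<kappa> * E"])
  show ?thesis
    using main Q_part y_part unfolding R_def \<rho>_def by (simp only: distrib_left)
qed

context
  fixes u u' :: "real \<Rightarrow> 'a::real_inner" and r r' :: "real \<Rightarrow> 'b::real_inner" and y :: 'b
    and E k Q :: "real \<Rightarrow> real" and t \<kappa> \<nu> M :: real
  assumes t: "t \<ge> 0" and constants: "\<nu> > 0" "M \<ge> 0" "\<kappa> \<ge> 0"
    and u_deriv: "\<And>\<tau>. \<tau> \<in> {0..t} \<Longrightarrow> (u has_vector_derivative u' \<tau>) (at \<tau> within {0..t})"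
    and r_deriv: "\<And>\<tau>. \<tau> \<in> {0..t} \<Longrightarrow> (r has_vector_derivative r' \<tau>) (at \<tau> within {0..t})"
    and E_deriv: "\<And>\<tau>. \<tau> \<in> {0..t} \<Longrightarrow> (E has_real_derivative \<kappa> * E \<tau>) (at \<tau> within {0..t})"
    and E_pos: "\<And>\<tau>. \<tau> \<in> {0..t} \<Longrightarrow> E \<tau> > 0"
    and k_cont: "continuous_on {0..t} k"
    and k_nonneg: "\<And>\<tau>. \<tau> \<in> {0..t} \<Longrightarrow> k \<tau> \<ge> 0"
    and u'_le: "\<And>\<tau>. \<tau> \<in> {0<..<t} \<Longrightarrow> norm (u' \<tau>) \<le> k \<tau> * Q \<tau>"
    and rr'_le: "\<And>\<tau>. \<tau> \<in> {0<..<t} \<Longrightarrow>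
      r \<tau> \<bullet> r' \<tau> \<le> - k \<tau> / (\<nu> * E \<tau>) * (Q \<tau>)\<^sup>2 - \<kappa> * ((norm (r \<tau>))\<^sup>2 + r \<tau> \<bullet> y)"
    and Q_bounds: "\<And>\<tau>. \<tau> \<in> {0<..<t} \<Longrightarrow> \<nu> * norm (r \<tau>) \<le> Q \<tau> \<and> Q \<tau> \<le> M * norm (r \<tau>)"
begin

(* The norms are smoothed to sqrt (norm _^2 + e^2) to make the Lyapunov function differentiable;
   the resulting error of order e disappears in the limit e -> 0 taken in lyapunov_nonincreasing. *)

lemma lyapunov_smoothed_le:
  assumes "e > 0" and B: "\<And>\<tau>. \<tau> \<in> {0..t} \<Longrightarrow> \<kappa> * E \<tau> + k \<tau> * M \<le> B"
  shows "norm (u t) + E t * (norm (r t) - norm y)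
    \<le> norm (u 0) + E 0 * (norm (r 0) - norm y) + e * (1 + E 0 + B * t)"
proof -
  define U where "U \<tau> = sqrt ((norm (u \<tau>))\<^sup>2 + e\<^sup>2)" for \<tau>
  define R where "R \<tau> = sqrt ((norm (r \<tau>))\<^sup>2 + e\<^sup>2)" for \<tau>
  note U_bounds = sqrt_sum_sq_bounds[OF norm_ge_zero \<open>e > 0\<close>, of "u _", folded U_def]
  note R_bounds = sqrt_sum_sq_bounds[OF norm_ge_zero \<open>e > 0\<close>, of "r _", folded R_def]
  define D where "D \<tau> = U \<tau> + E \<tau> * (R \<tau> - norm y) - e * B * \<tau>" for \<tau>
  define D' where "D' \<tau> = (u \<tau> \<bullet> u' \<tau>) / U \<tau>
    + (\<kappa> * E \<tau> * (R \<tau> - norm y) + E \<tau> * ((r \<tau> \<bullet> r' \<tau>) / R \<tau>)) - e * B" for \<tau>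
  have "(D has_real_derivative D' \<tau>) (at \<tau> within {0..t})" if "\<tau> \<in> {0..t}" for \<tau>
  proof -
    have "(U has_real_derivative (u \<tau> \<bullet> u' \<tau>) / U \<tau>) (at \<tau> within {0..t})"
      unfolding U_def[abs_def] using u_deriv[OF that] \<open>e > 0\<close>
      by (intro has_real_derivative_smoothed_norm) auto
    moreover have "(R has_real_derivative (r \<tau> \<bullet> r' \<tau>) / R \<tau>) (at \<tau> within {0..t})"
      unfolding R_def[abs_def] using r_deriv[OF that] \<open>e > 0\<close>
      by (intro has_real_derivative_smoothed_norm) auto
    ultimately show ?thesis
      unfolding D_def[abs_def] D'_def
      by (auto intro!: derivative_eq_intros E_deriv that simp: algebra_simps)
  qed
  moreover have "D' \<tau> \<le> 0" if \<tau>: "\<tau> \<in> {0<..<t}" for \<tau>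
  proof -
    have "(u \<tau> \<bullet> u' \<tau>) / U \<tau> \<le> k \<tau> * Q \<tau>"
      using inner_div_smoothed_norm_le[OF \<open>e > 0\<close>, of "u \<tau>" "u' \<tau>"] u'_le[OF \<tau>]
      unfolding U_def by linarith
    moreover have "\<kappa> * E \<tau> * (R \<tau> - norm y) + E \<tau> * ((r \<tau> \<bullet> r' \<tau>) / R \<tau>)
        \<le> - (k \<tau> * Q \<tau>) + e * (\<kappa> * E \<tau> + k \<tau> * M)"
    proof -
      have "\<tau> \<in> {0..t}"
        using \<tau> by simp
      with Q_bounds[OF \<tau>] show ?thesis
        unfolding R_def
        by (intro smoothed_residual_derivative_le[OF \<open>e > 0\<close> constants E_pos k_nonneg rr'_le[OF \<tau>]])
          auto
    qed
    moreover have "e * (\<kappa> * E \<tau> + k \<tau> * M) \<le> e * B"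
      using B \<tau> \<open>e > 0\<close> by (simp add: mult_left_mono)
    ultimately show ?thesis
      unfolding D'_def by linarith
  qed
  ultimately have "D t \<le> D 0"
    by (intro has_real_derivative_nonpos_imp_le[OF t]) auto
  moreover have "norm (u t) + E t * (norm (r t) - norm y) - e * B * t \<le> D t"
  proof -
    have "E t * (norm (r t) - norm y) \<le> E t * (R t - norm y)"
      using R_bounds(1)[of t] E_pos[of t] t by (intro mult_left_mono) auto
    then show ?thesis
      using U_bounds(1)[of t] unfolding D_def by linarith
  qed
  moreover have "D 0 \<le> norm (u 0) + E 0 * (norm (r 0) - norm y) + e * (1 + E 0)"
  proof -
    have "E 0 * (R 0 - norm y) \<le> E 0 * (norm (r 0) + e - norm y)"
      using R_bounds(3)[of 0] E_pos[of 0] t by (intro mult_left_mono) auto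
    then show ?thesis
      using U_bounds(3)[of 0] unfolding D_def by (simp add: algebra_simps)
  qed
  ultimately show ?thesis
    by (simp add: algebra_simps)
qed

lemma lyapunov_nonincreasing:
  "norm (u t) + E t * (norm (r t) - norm y) \<le> norm (u 0) + E 0 * (norm (r 0) - norm y)"
proof -
  have "continuous_on {0..t} E"
    unfolding continuous_on_eq_continuous_within using E_deriv DERIV_continuous by blast
  then have "continuous_on {0..t} (\<lambda>\<tau>. \<kappa> * E \<tau> + k \<tau> * M)"
    using k_cont by (intro continuous_intros)
  then obtain \<tau>0 where "\<forall>\<tau>\<in>{0..t}. \<kappa> * E \<tau> + k \<tau> * M \<le> \<kappa> * E \<tau>0 + k \<tau>0 * M"
    using continuous_attains_sup[OF compact_Icc, of 0 t] t by auto
  then obtain B where "B \<ge> 0" and B: "\<And>\<tau>. \<tau> \<in> {0..t} \<Longrightarrow> \<kappa> * E \<tau> + k \<tau> * M \<le> B"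
    by (meson max.cobounded1 max.coboundedI2)
  show ?thesis
  proof (rule field_le_epsilon)
    fix e :: real assume "e > 0"
    have "1 + E 0 + B * t > 0"
      using E_pos[of 0] \<open>B \<ge> 0\<close> t by (simp add: add_pos_nonneg)
    then show "norm (u t) + E t * (norm (r t) - norm y) \<le> norm (u 0) + E 0 * (norm (r 0) - norm y) + e"
      using lyapunov_smoothed_le[of "e / (1 + E 0 + B * t)", OF _ B] \<open>e > 0\<close> by simp
  qed
qed

end

section \<open>The rescaled gradient flow\<close>

lemma has_vector_derivative_vec_lambda:
  assumes "\<And>i. ((\<lambda>t. g t i) has_real_derivative g' i) (at x within S)"
  shows "((\<lambda>t. \<chi> i. g t i) has_vector_derivative (\<chi> i. g' i)) (at x within S)"
proof -
  have "((\<lambda>t. \<Sum>i\<in>UNIV. g t i *\<^sub>R axis i (1::real)) has_vector_derivative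
      (\<Sum>i\<in>UNIV. g' i *\<^sub>R axis i 1)) (at x within S)"
    using assms by (intro derivative_eq_intros) (auto simp: has_real_derivative_iff_has_vector_derivative)
  moreover have "(\<Sum>i\<in>UNIV. c i *\<^sub>R axis i (1::real)) = (\<chi> i. c i)" for c :: "'a \<Rightarrow> real"
    by (auto simp: vec_eq_iff axis_def if_distrib cong: if_cong)
  ultimately show ?thesis
    by simp
qed

locale homogeneous_gradient_flow =
  fixes F :: "'i::finite \<Rightarrow> 'a::euclidean_space \<Rightarrow> real"
    and G :: "'i \<Rightarrow> 'a \<Rightarrow> 'a"
    and y :: "'i \<Rightarrow> real"
    and L l \<alpha> :: real
    and \<theta> :: "real \<Rightarrow> 'a"
  assumes F_has_derivative: "\<And>i x. (F i has_derivative (\<lambda>h. G i x \<bullet> h)) (at x)"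
    and G_scaleR: "\<And>i c x. c > 0 \<Longrightarrow> G i (c *\<^sub>R x) = c powr (L - 1) *\<^sub>R G i x"
    and G_inner_self: "\<And>i x. G i x \<bullet> x = L * F i x"
    and L_pos: "L > 0" and l_pos: "l > 0" and \<alpha>_pos: "\<alpha> > 0"
    and flow: "\<And>\<tau>. \<tau> \<ge> 0 \<Longrightarrow> (\<theta> has_vector_derivative
      - ((2 / real CARD('i)) *\<^sub>R (\<Sum>i\<in>UNIV. (F i (\<theta> \<tau>) - y i) *\<^sub>R G i (\<theta> \<tau>)) + l *\<^sub>R \<theta> \<tau>))
      (at \<tau> within {0..})"
    and F_init: "\<And>i. F i (\<theta> 0) = 0"
begin

definition velocity :: "real \<Rightarrow> 'a" where
  "velocity \<tau> = - ((2 / real CARD('i)) *\<^sub>R (\<Sum>i\<in>UNIV. (F i (\<theta> \<tau>) - y i) *\<^sub>R G i (\<theta> \<tau>)) + l *\<^sub>R \<theta> \<tau>)"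

definition magnitude :: "real \<Rightarrow> real" where
  "magnitude \<tau> = \<alpha> * exp (- (l * \<tau>))"

definition rescaled :: "real \<Rightarrow> 'a" where
  "rescaled \<tau> = (exp (l * \<tau>) / \<alpha>) *\<^sub>R \<theta> \<tau>"

definition residual :: "real \<Rightarrow> real^'i" where
  "residual \<tau> = (\<chi> i. F i (\<theta> \<tau>) - y i)"

definition residual_combination :: "real \<Rightarrow> 'a" where
  "residual_combination \<tau> = lincomb (\<lambda>i. G i (rescaled \<tau>)) (residual \<tau>)"

lemma magnitude_pos: "magnitude \<tau> > 0"
  using \<alpha>_pos by (simp add: magnitude_def)

lemma exp_div_alpha_eq: "exp (l * \<tau>) / \<alpha> = 1 / magnitude \<tau>"
  by (simp add: magnitude_def exp_minus divide_inverse)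

lemma theta_eq_scaleR_rescaled: "\<theta> \<tau> = magnitude \<tau> *\<^sub>R rescaled \<tau>"
  using \<alpha>_pos by (simp add: magnitude_def rescaled_def exp_minus field_simps)

lemma G_at_theta: "G i (\<theta> \<tau>) = magnitude \<tau> powr (L - 1) *\<^sub>R G i (rescaled \<tau>)"
  by (subst theta_eq_scaleR_rescaled) (rule G_scaleR[OF magnitude_pos])

lemma residual_gradient_sum_eq:
  "(\<Sum>i\<in>UNIV. (F i (\<theta> \<tau>) - y i) *\<^sub>R G i (\<theta> \<tau>)) = magnitude \<tau> powr (L - 1) *\<^sub>R residual_combination \<tau>"
  by (simp add: residual_combination_def lincomb_def residual_def G_at_theta scaleR_sum_right
      mult.commute)

lemma rescaled_has_vector_derivative:
  assumes "\<tau> \<ge> 0"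
  shows "(rescaled has_vector_derivative
    - ((2 / real CARD('i)) * magnitude \<tau> powr (L - 2)) *\<^sub>R residual_combination \<tau>) (at \<tau> within {0..})"
proof -
  have "((\<lambda>\<tau>. exp (l * \<tau>) / \<alpha>) has_real_derivative l * (exp (l * \<tau>) / \<alpha>)) (at \<tau> within {0..})"
    using \<alpha>_pos by (auto intro!: derivative_eq_intros simp: field_simps)
  from has_vector_derivative_scaleR[OF this flow[OF assms]]
  have "(rescaled has_vector_derivative - (2 / real CARD('i) * (exp (l * \<tau>) / \<alpha>)) *\<^sub>R
      (\<Sum>i\<in>UNIV. (F i (\<theta> \<tau>) - y i) *\<^sub>R G i (\<theta> \<tau>))) (at \<tau> within {0..})"
    unfolding rescaled_def[symmetric, abs_def] using \<alpha>_pos by (simp add: algebra_simps)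
  moreover have "2 / real CARD('i) * (exp (l * \<tau>) / \<alpha>) * magnitude \<tau> powr (L - 1)
      = 2 / real CARD('i) * magnitude \<tau> powr (L - 2)"
    using magnitude_pos[of \<tau>] by (simp add: exp_div_alpha_eq powr_diff power2_eq_square)
  ultimately show ?thesis
    by (simp only: residual_gradient_sum_eq scaleR_scaleR mult_minus_left)
qed

lemma residual_has_vector_derivative:
  assumes "\<tau> \<ge> 0"
  shows "(residual has_vector_derivative (\<chi> i. G i (\<theta> \<tau>) \<bullet> velocity \<tau>)) (at \<tau> within {0..})"
proof -
  have "((\<lambda>t. F i (\<theta> t) - y i) has_real_derivative G i (\<theta> \<tau>) \<bullet> velocity \<tau>) (at \<tau> within {0..})" for i
    using has_derivative_compose[OF flow[OF assms, unfolded has_vector_derivative_def]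
        F_has_derivative[of i "\<theta> \<tau>"]]
    by (auto intro!: derivative_eq_intros simp: has_field_derivative_def velocity_def mult_commute_abs)
  then show ?thesis
    unfolding residual_def[abs_def] by (rule has_vector_derivative_vec_lambda)
qed

lemma residual_inner_velocity:
  "residual \<tau> \<bullet> (\<chi> i. G i (\<theta> \<tau>) \<bullet> velocity \<tau>)
    = - (2 / real CARD('i)) * magnitude \<tau> powr (2 * L - 2) * (norm (residual_combination \<tau>))\<^sup>2
      - L * l * ((norm (residual \<tau>))\<^sup>2 + residual \<tau> \<bullet> (\<chi> i. y i))"
proof -
  define V where "V = (\<Sum>i\<in>UNIV. (F i (\<theta> \<tau>) - y i) *\<^sub>R G i (\<theta> \<tau>))"
  have "residual \<tau> \<bullet> (\<chi> i. G i (\<theta> \<tau>) \<bullet> velocity \<tau>) = V \<bullet> velocity \<tau>"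
    by (simp add: V_def residual_def inner_vec_def inner_sum_left)
  also have "\<dots> = - (2 / real CARD('i)) * (V \<bullet> V) - l * (V \<bullet> \<theta> \<tau>)"
    by (simp add: velocity_def V_def[symmetric] inner_diff_right)
  also have "V \<bullet> V = magnitude \<tau> powr (2 * L - 2) * (norm (residual_combination \<tau>))\<^sup>2"
    using magnitude_pos[of \<tau>]
    by (simp add: V_def residual_gradient_sum_eq power2_norm_eq_inner powr_add[symmetric] mult_ac)
  also have "V \<bullet> \<theta> \<tau> = L * ((norm (residual \<tau>))\<^sup>2 + residual \<tau> \<bullet> (\<chi> i. y i))"
    unfolding power2_norm_eq_inner
    by (simp add: V_def inner_sum_left G_inner_self residual_def inner_vec_def
        sum_distrib_left sum.distrib[symmetric] algebra_simps)
  finally show ?thesis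
    by (simp add: algebra_simps)
qed

lemma magnitude_powr_neg: "magnitude \<tau> powr (- L) = \<alpha> powr (- L) * exp (L * l * \<tau>)"
  using \<alpha>_pos by (simp add: magnitude_def powr_def ln_mult exp_add[symmetric] algebra_simps)

theorem rescaled_deviation_bound:
  assumes riesz: "riesz_bounds_near G x0 \<delta> \<nu> M"
    and "\<nu> > 0" "M \<ge> 0"
    and init: "\<theta> 0 = \<alpha> *\<^sub>R x0"
    and "t \<ge> 0"
    and stays: "\<And>\<tau>. 0 < \<tau> \<Longrightarrow> \<tau> < t \<Longrightarrow> norm (rescaled \<tau> - x0) < \<delta>"
  shows "norm (rescaled t - x0) \<le> norm (\<chi> i. y i) / \<nu> * \<alpha> powr (- L) * exp (L * l * t)"
proof -
  define k where "k \<tau> = 2 / real CARD('i) * magnitude \<tau> powr (L - 2)" for \<tau>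
  (* E = magnitude^(-L) / nu makes k / (nu * E) the coefficient in residual_inner_velocity. *)
  define E where "E \<tau> = \<alpha> powr (- L) * exp (L * l * \<tau>) / \<nu>" for \<tau>
  have E_eq: "\<nu> * E \<tau> = magnitude \<tau> powr (- L)" for \<tau>
    using \<open>\<nu> > 0\<close> by (simp add: E_def magnitude_powr_neg)
  have "norm (rescaled t - x0) + E t * (norm (residual t) - norm (\<chi> i. y i))
      \<le> norm (rescaled 0 - x0) + E 0 * (norm (residual 0) - norm (\<chi> i. y i))"
  proof (rule lyapunov_nonincreasing[where Q = "\<lambda>\<tau>. norm (residual_combination \<tau>)"])
    fix \<tau> assume "\<tau> \<in> {0..t}"
    then have "\<tau> \<ge> 0"
      by simp
    show "((\<lambda>\<tau>. rescaled \<tau> - x0) has_vector_derivative - k \<tau> *\<^sub>R residual_combination \<tau>)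
        (at \<tau> within {0..t})"
      unfolding k_def using rescaled_has_vector_derivative[OF \<open>\<tau> \<ge> 0\<close>]
      by (auto intro!: derivative_eq_intros intro: has_vector_derivative_within_subset)
    show "(residual has_vector_derivative (\<chi> i. G i (\<theta> \<tau>) \<bullet> velocity \<tau>)) (at \<tau> within {0..t})"
      using residual_has_vector_derivative[OF \<open>\<tau> \<ge> 0\<close>]
      by (rule has_vector_derivative_within_subset) auto
    show "(E has_real_derivative L * l * E \<tau>) (at \<tau> within {0..t})"
      unfolding E_def[abs_def] using \<open>\<nu> > 0\<close> by (auto intro!: derivative_eq_intros)
    show "E \<tau> > 0" "k \<tau> \<ge> 0"
      using \<alpha>_pos \<open>\<nu> > 0\<close> by (simp_all add: E_def k_def)
  next
    fix \<tau> assume \<tau>: "\<tau> \<in> {0<..<t}"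
    show "norm (- k \<tau> *\<^sub>R residual_combination \<tau>) \<le> k \<tau> * norm (residual_combination \<tau>)"
      by (simp add: k_def)
    have "k \<tau> / (\<nu> * E \<tau>) = 2 / real CARD('i) * magnitude \<tau> powr (2 * L - 2)"
      using magnitude_pos[of \<tau>] \<open>\<nu> > 0\<close>
      by (simp add: k_def E_eq powr_minus_divide powr_add[symmetric])
    then show "residual \<tau> \<bullet> (\<chi> i. G i (\<theta> \<tau>) \<bullet> velocity \<tau>) \<le> - k \<tau> / (\<nu> * E \<tau>) *
        (norm (residual_combination \<tau>))\<^sup>2 - L * l * ((norm (residual \<tau>))\<^sup>2 + residual \<tau> \<bullet> (\<chi> i. y i))"
      by (simp add: residual_inner_velocity)
    show "\<nu> * norm (residual \<tau>) \<le> norm (residual_combination \<tau>)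
        \<and> norm (residual_combination \<tau>) \<le> M * norm (residual \<tau>)"
      using riesz stays \<tau> by (simp add: riesz_bounds_near_def residual_combination_def)
  qed (use \<open>t \<ge> 0\<close> \<open>\<nu> > 0\<close> \<open>M \<ge> 0\<close> L_pos l_pos \<alpha>_pos in
      \<open>auto simp: k_def magnitude_def intro!: continuous_intros\<close>)
  moreover have "rescaled 0 = x0" "residual 0 = - (\<chi> i. y i)"
    using init F_init \<alpha>_pos by (simp_all add: rescaled_def residual_def vec_eq_iff)
  ultimately have "norm (rescaled t - x0) \<le> E t * norm (\<chi> i. y i) - E t * norm (residual t)"
    by (simp add: algebra_simps)
  also have "\<dots> \<le> E t * norm (\<chi> i. y i)"
    using \<alpha>_pos \<open>\<nu> > 0\<close> by (simp add: E_def)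
  finally show ?thesis
    by (simp add: E_def mult_ac)
qed

end

section \<open>Staying near the initialization\<close>

lemma continuous_bootstrap:
  fixes g B :: "real \<Rightarrow> real"
  assumes cont: "continuous_on {0..T} g"
    and bound: "\<And>t. 0 \<le> t \<Longrightarrow> t \<le> T \<Longrightarrow> (\<And>\<tau>. 0 < \<tau> \<Longrightarrow> \<tau> < t \<Longrightarrow> g \<tau> < \<delta>) \<Longrightarrow> g t \<le> B t"
    and below: "\<And>t. 0 \<le> t \<Longrightarrow> t \<le> T \<Longrightarrow> B t < \<delta>"
    and t: "0 \<le> t" "t \<le> T"
  shows "g t < \<delta>"
proof (rule ccontr)
  assume "\<not> g t < \<delta>"
  define S where "S = {0..T} \<inter> g -` {\<delta>..}"
  have "t \<in> S"
    using t \<open>\<not> g t < \<delta>\<close> by (simp add: S_def)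
  have "closed S"
    unfolding S_def by (rule continuous_closed_preimage[OF cont closed_atLeastAtMost closed_atLeast])
  have "bdd_below S"
    unfolding S_def by (rule bdd_belowI[of _ 0]) auto
  define t1 where "t1 = Inf S"
  have "t1 \<in> S"
    unfolding t1_def using closed_contains_Inf \<open>t \<in> S\<close> \<open>closed S\<close> \<open>bdd_below S\<close> by blast
  then have t1: "0 \<le> t1" "t1 \<le> T" "\<delta> \<le> g t1"
    by (auto simp: S_def)
  have "g \<tau> < \<delta>" if "0 < \<tau>" "\<tau> < t1" for \<tau>
  proof (rule ccontr)
    assume "\<not> g \<tau> < \<delta>"
    then have "\<tau> \<in> S"
      using that t1 by (simp add: S_def)
    then have "t1 \<le> \<tau>"
      unfolding t1_def using \<open>bdd_below S\<close> by (rule cInf_lower)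
    with \<open>\<tau> < t1\<close> show False
      by simp
  qed
  then have "g t1 \<le> B t1"
    using bound t1(1,2) by blast
  with below[OF t1(1,2)] t1(3) show False
    by linarith
qed

lemma Tmax_geI:
  assumes "\<And>t. 0 \<le> t \<Longrightarrow> t \<le> T \<Longrightarrow> norm ((exp (lam * t) / alpha) *\<^sub>R th t - thinit) \<le> eps"
  shows "ereal T \<le> Tmax lam alpha th thinit eps"
  unfolding Tmax_def
proof (rule Inf_greatest)
  fix x assume "x \<in> ereal ` {t. 0 \<le> t \<and> eps < norm ((exp (lam * t) / alpha) *\<^sub>R th t - thinit)}"
  then obtain t where "x = ereal t" "0 \<le> t" "eps < norm ((exp (lam * t) / alpha) *\<^sub>R th t - thinit)"
    by auto
  with assms[of t] show "ereal T \<le> x"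
    by force
qed

context homogeneous_gradient_flow
begin

theorem rescaled_deviation_bound_upto:
  assumes riesz: "riesz_bounds_near G x0 \<delta> \<nu> M"
    and "\<nu> > 0" "M \<ge> 0"
    and init: "\<theta> 0 = \<alpha> *\<^sub>R x0"
    and small: "norm (\<chi> i. y i) / \<nu> * \<alpha> powr (- L) * exp (L * l * T) < \<delta>"
    and t: "0 \<le> t" "t \<le> T"
  shows "norm (rescaled t - x0) < \<delta>"
    and "norm (rescaled t - x0) \<le> norm (\<chi> i. y i) / \<nu> * \<alpha> powr (- L) * exp (L * l * t)"
proof -
  define B where "B t = norm (\<chi> i. y i) / \<nu> * \<alpha> powr (- L) * exp (L * l * t)" for t
  have "continuous_on {0..} rescaled"
    unfolding continuous_on_eq_continuous_within
    using has_vector_derivative_continuous[OF rescaled_has_vector_derivative] by auto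
  then have "continuous_on {0..T} rescaled"
    by (rule continuous_on_subset) auto
  then have cont: "continuous_on {0..T} (\<lambda>t. norm (rescaled t - x0))"
    by (intro continuous_intros)
  have B_small: "B t < \<delta>" if "t \<le> T" for t
  proof -
    have "B t \<le> B T"
      unfolding B_def using that L_pos l_pos \<alpha>_pos \<open>\<nu> > 0\<close>
      by (intro mult_left_mono) (auto simp: mult_left_mono)
    with small show ?thesis
      by (simp add: B_def)
  qed
  have bound: "norm (rescaled s - x0) \<le> B s"
    if "0 \<le> s" "\<And>\<tau>. 0 < \<tau> \<Longrightarrow> \<tau> < s \<Longrightarrow> norm (rescaled \<tau> - x0) < \<delta>" for s
    unfolding B_def by (rule rescaled_deviation_bound[OF riesz \<open>\<nu> > 0\<close> \<open>M \<ge> 0\<close> init that])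
  have stays: "norm (rescaled s - x0) < \<delta>" if "0 \<le> s" "s \<le> T" for s
    using cont bound B_small that by (rule continuous_bootstrap)
  then show "norm (rescaled t - x0) < \<delta>"
    using t .
  show "norm (rescaled t - x0) \<le> B t"
    using t by (intro bound) (auto intro: stays)
qed

lemma bounds_until_log_time:
  assumes riesz: "riesz_bounds_near G x0 \<delta> \<nu> M" and "\<nu> > 0" "M \<ge> 0" "\<delta> \<le> eps"
    and init: "\<theta> 0 = \<alpha> *\<^sub>R x0"
    and small: "norm (\<chi> i. y i) / \<nu> * exp (L * DT) < \<delta>"
  defines "T \<equiv> (ln \<alpha> + DT) / l"
  shows "ereal T \<le> Tmax l \<alpha> \<theta> x0 eps"
    and "\<And>t. 0 \<le> t \<Longrightarrow> t \<le> T \<Longrightarrow>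
      norm ((exp (l * t) / \<alpha>) *\<^sub>R \<theta> t - x0) \<le> norm (\<chi> i. y i) / \<nu> * \<alpha> powr (- L) * exp (L * l * t)"
proof -
  have "\<alpha> powr (- L) * exp (L * l * T) = exp (L * DT)"
    using \<alpha>_pos l_pos by (simp add: T_def powr_def field_simps exp_add[symmetric] exp_diff)
  with small have small_T: "norm (\<chi> i. y i) / \<nu> * \<alpha> powr (- L) * exp (L * l * T) < \<delta>"
    by (simp only: mult.assoc)
  note bounds = rescaled_deviation_bound_upto[OF riesz \<open>\<nu> > 0\<close> \<open>M \<ge> 0\<close> init small_T]
  show "ereal T \<le> Tmax l \<alpha> \<theta> x0 eps"
  proof (rule Tmax_geI)
    fix t assume "0 \<le> t" "t \<le> T"
    then have "norm (rescaled t - x0) < \<delta>"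
      by (rule bounds(1))
    with \<open>\<delta> \<le> eps\<close> show "norm ((exp (l * t) / \<alpha>) *\<^sub>R \<theta> t - x0) \<le> eps"
      by (simp add: rescaled_def)
  qed
  show "norm ((exp (l * t) / \<alpha>) *\<^sub>R \<theta> t - x0) \<le> norm (\<chi> i. y i) / \<nu> * \<alpha> powr (- L) * exp (L * l * t)"
    if "0 \<le> t" "t \<le> T" for t
    using bounds(2)[OF that] by (simp add: rescaled_def)
qed

end

lemma homogeneous_gradient_flow_regloss:
  fixes f :: "'a::euclidean_space \<Rightarrow> 'x \<Rightarrow> real" and xs :: "'i::finite \<Rightarrow> 'x"
  assumes C2: "\<And>x. C2 (\<lambda>th. f th x)" and hom: "\<And>x. homogeneous L (\<lambda>th. f th x)"
    and "L > 0" "l > 0" "\<alpha> > 0"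
    and init_zero: "\<And>x. f x0 x = 0"
    and flow: "\<And>t. t \<ge> 0 \<Longrightarrow>
      (\<theta> has_vector_derivative - grad (regloss f xs ys l) (\<theta> t)) (at t within {0..})"
    and init: "\<theta> 0 = \<alpha> *\<^sub>R x0"
  shows "homogeneous_gradient_flow (\<lambda>i th. f th (xs i)) (\<lambda>i. grad (\<lambda>th. f th (xs i))) ys L l \<alpha> \<theta>"
proof
  show "((\<lambda>th. f th (xs i)) has_derivative (\<lambda>h. grad (\<lambda>th. f th (xs i)) x \<bullet> h)) (at x)" for i x
    by (rule C2_has_derivative_grad[OF C2])
  show "grad (\<lambda>th. f th (xs i)) (c *\<^sub>R x) = c powr (L - 1) *\<^sub>R grad (\<lambda>th. f th (xs i)) x"
    if "c > 0" for i c x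
    by (rule homogeneous_grad_scaleR[OF C2 hom that])
  show "grad (\<lambda>th. f th (xs i)) x \<bullet> x = L * f x (xs i)" for i x
    by (rule homogeneous_euler[OF C2 hom])
  show "(\<theta> has_vector_derivative - ((2 / real CARD('i)) *\<^sub>R (\<Sum>i\<in>UNIV. (f (\<theta> t) (xs i) - ys i) *\<^sub>R
      grad (\<lambda>th. f th (xs i)) (\<theta> t)) + l *\<^sub>R \<theta> t)) (at t within {0..})" if "t \<ge> 0" for t
    using flow[OF that] by (simp only: grad_regloss[OF C2])
  show "f (\<theta> 0) (xs i) = 0" for i
    using hom[of "xs i"] init_zero \<open>\<alpha> > 0\<close> by (simp add: init homogeneous_def)
  show "L > 0" "l > 0" "\<alpha> > 0"
    by (fact assms)+
qed

theorem lemmaD2: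
  fixes f :: "'a::euclidean_space \<Rightarrow> 'x \<Rightarrow> real"
    and xs :: "'i::finite \<Rightarrow> 'x" and ys :: "'i \<Rightarrow> real"
    and L p eps_max :: real
    and lam :: "real \<Rightarrow> real"
    and thinit :: 'a
    and theta :: "real \<Rightarrow> real \<Rightarrow> 'a"
  assumes C2: "\<And>x. C2 (\<lambda>th. f th x)"
    and hom: "\<And>x. homogeneous L (\<lambda>th. f th x)"
    and L_pos: "L > 0"
    and init_zero: "\<And>x. f thinit x = 0"
    and p_pos: "p > 0"
    and lam_pos: "\<And>alpha. alpha > 0 \<Longrightarrow> lam alpha > 0"
    and lam_Theta: "lam \<in> \<Theta>(\<lambda>alpha. alpha powr (- p))"
    and lin_indep: "\<not> dependent (range (\<lambda>i. grad (\<lambda>th. f th (xs i)) thinit))"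
    and inj_grad: "inj (\<lambda>i. grad (\<lambda>th. f th (xs i)) thinit)"
    and ntk_pos: "min_eig (ntk f xs thinit) > 0"
    and eps_pos: "eps_max > 0"
    and eps_prop: "\<And>th. norm (th - thinit) < eps_max \<Longrightarrow>
                      min_eig (ntk f xs th) > min_eig (ntk f xs thinit) / 2"
    and flow: "\<And>alpha t. alpha > 0 \<Longrightarrow> t \<ge> 0 \<Longrightarrow>
        (theta alpha has_vector_derivative
           - grad (regloss f xs ys (lam alpha)) (theta alpha t)) (at t within {0..})"
    and flow_init: "\<And>alpha. alpha > 0 \<Longrightarrow> theta alpha 0 = alpha *\<^sub>R thinit"
  shows "\<exists>DeltaT C alpha0. \<forall>alpha \<ge> alpha0. alpha > 0 \<and>
           ereal ((ln alpha + DeltaT) / lam alpha) \<le> Tmax (lam alpha) alpha (theta alpha) thinit eps_max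
         \<and> (\<forall>t. 0 \<le> t \<and> t \<le> (ln alpha + DeltaT) / lam alpha \<longrightarrow>
              norm ((exp (lam alpha * t) / alpha) *\<^sub>R theta alpha t - thinit)
                \<le> C * alpha powr (- L) * exp (L * lam alpha * t))"
proof -
  define G where "G = (\<lambda>i. grad (\<lambda>th. f th (xs i)))"
  have "\<And>i. continuous_on UNIV (G i)" "\<not> dependent (range (\<lambda>i. G i thinit))" "inj (\<lambda>i. G i thinit)"
    using C2_continuous_grad[OF C2] lin_indep inj_grad by (simp_all add: G_def)
  then obtain \<delta>0 \<nu> M where "\<delta>0 > 0" "\<nu> > 0" "M > 0" and riesz0: "riesz_bounds_near G thinit \<delta>0 \<nu> M"
    by (rule riesz_bounds_near_exists)
  define \<delta> where "\<delta> = min \<delta>0 eps_max"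
  have riesz: "riesz_bounds_near G thinit \<delta> \<nu> M"
    using riesz0 by (auto simp: riesz_bounds_near_def \<delta>_def)
  define C where "C = norm (\<chi> i. ys i) / \<nu>"
  define DT where "DT = ln (\<delta> / (C + 1)) / L"
  have "\<delta> > 0" "C \<ge> 0"
    using \<open>\<delta>0 > 0\<close> eps_pos \<open>\<nu> > 0\<close> by (simp_all add: \<delta>_def C_def)
  then have "C * exp (L * DT) = \<delta> * (C / (C + 1))"
    using L_pos by (simp add: DT_def)
  also have "\<dots> < \<delta>"
    using mult_strict_left_mono[of "C / (C + 1)" 1 \<delta>] \<open>\<delta> > 0\<close> \<open>C \<ge> 0\<close> by simp
  finally have small: "C * exp (L * DT) < \<delta>" .
  have "alpha > 0 \<and> ereal ((ln alpha + DT) / lam alpha) \<le> Tmax (lam alpha) alpha (theta alpha) thinit eps_max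
      \<and> (\<forall>t. 0 \<le> t \<and> t \<le> (ln alpha + DT) / lam alpha \<longrightarrow>
        norm ((exp (lam alpha * t) / alpha) *\<^sub>R theta alpha t - thinit)
          \<le> C * alpha powr (- L) * exp (L * lam alpha * t))" if "alpha \<ge> 1" for alpha
  proof -
    have "alpha > 0" "lam alpha > 0"
      using that lam_pos by auto
    interpret homogeneous_gradient_flow "\<lambda>i th. f th (xs i)" G ys L "lam alpha" alpha "theta alpha"
      unfolding G_def
      by (rule homogeneous_gradient_flow_regloss[OF C2 hom L_pos \<open>lam alpha > 0\<close> \<open>alpha > 0\<close>
          init_zero flow[OF \<open>alpha > 0\<close>] flow_init[OF \<open>alpha > 0\<close>]])
    have "M \<ge> 0" "\<delta> \<le> eps_max"
      using \<open>M > 0\<close> by (simp_all add: \<delta>_def)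
    note bounds = bounds_until_log_time[OF riesz \<open>\<nu> > 0\<close> this flow_init[OF \<open>alpha > 0\<close>]
        small[unfolded C_def]]
    show ?thesis
      using \<open>alpha > 0\<close> bounds unfolding C_def by blast
  qed
  then show ?thesis
    by (intro exI[of _ DT] exI[of _ C] exI[of _ 1] allI impI)
qed

end
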